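(* Let $\mathcal A$ be a $C^*$-algebra with identity $1$, let $\delta\colon\mathcal A\to\mathcal A$ be a $^*$-endomorphism, and let $\delta_*$ be a non-degenerate transfer operator for $(\mathcal A,\delta)$. Then: 1) $\delta_*(1)$ is an orthogonal projection lying in the center of $\mathcal A$; 2) $\delta_*(\mathcal A)=\delta_*(1)\mathcal A$; 3) the restriction of $\delta$ to $\delta_*(\mathcal A)$ is a $^*$-isomorphism of $\delta_*(\mathcal A)$ onto $\delta(\mathcal A)$, and the restriction of $\delta_*$ to $\delta(\mathcal A)$ is a $^*$-isomorphism of $\delta(\mathcal A)$ onto $\delta_*(\mathcal A)$, namely the inverse of the former.
   Context: A transfer operator for $(\mathcal A,\delta)$ is a continuous positive linear map $\delta_*\colon\mathcal A\to\mathcal A$ such that $\delta_*(\delta(a)b)=a\,\delta_*(b)$ for all $a,b\in\mathcal A$. A transfer operator $\delta_*$ is called non-degenerate if $\delta(\delta_*(1))=\delta(1)$ (equivalently, $\delta\circ\delta_*\circ\delta=\delta$, or equivalently $\delta\circ\delta_*$ is a conditional expectation onto $\delta(\mathcal A)$). *)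

theory Defs
  imports "HOL-Analysis.Analysis"
begin

locale unital_cstar_algebra =
  fixes cscale :: "complex \<Rightarrow> 'a::{real_normed_algebra_1, banach} \<Rightarrow> 'a"
    and star :: "'a \<Rightarrow> 'a"
  assumes cscale_of_real: "cscale (complex_of_real r) x = scaleR r x"
    and cscale_add_right: "cscale c (x + y) = cscale c x + cscale c y"
    and cscale_add_left: "cscale (c + d) x = cscale c x + cscale d x"
    and cscale_cscale: "cscale c (cscale d x) = cscale (c * d) x"
    and cscale_one: "cscale 1 x = x"
    and cscale_mult_left: "cscale c x * y = cscale c (x * y)"
    and cscale_mult_right: "x * cscale c y = cscale c (x * y)"
    and norm_cscale: "norm (cscale c x) = cmod c * norm x"
    and star_star: "star (star x) = x"
    and star_add: "star (x + y) = star x + star y"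
    and star_cscale: "star (cscale c x) = cscale (cnj c) (star x)"
    and star_mult: "star (x * y) = star y * star x"
    and cstar_identity: "norm (star x * x) = (norm x)^2"

definition cpositive :: "('a::ring \<Rightarrow> 'a) \<Rightarrow> 'a \<Rightarrow> bool" where
  "cpositive star a \<longleftrightarrow> (\<exists>b. a = star b * b)"

definition clinear_map :: "(complex \<Rightarrow> 'a::ring \<Rightarrow> 'a) \<Rightarrow> ('a \<Rightarrow> 'a) \<Rightarrow> bool" where
  "clinear_map cscale f \<longleftrightarrow>
     (\<forall>x y. f (x + y) = f x + f y) \<and> (\<forall>c x. f (cscale c x) = cscale c (f x))"

text \<open>A *-endomorphism (not required to be unital).\<close>
definition star_endomorphism ::
  "(complex \<Rightarrow> 'a::ring \<Rightarrow> 'a) \<Rightarrow> ('a \<Rightarrow> 'a) \<Rightarrow> ('a \<Rightarrow> 'a) \<Rightarrow> bool" where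
  "star_endomorphism cscale star \<delta> \<longleftrightarrow> clinear_map cscale \<delta> \<and>
     (\<forall>x y. \<delta> (x * y) = \<delta> x * \<delta> y) \<and> (\<forall>x. \<delta> (star x) = star (\<delta> x))"

definition transfer_operator ::
  "(complex \<Rightarrow> 'a::real_normed_algebra \<Rightarrow> 'a) \<Rightarrow> ('a \<Rightarrow> 'a) \<Rightarrow> ('a \<Rightarrow> 'a) \<Rightarrow> ('a \<Rightarrow> 'a) \<Rightarrow> bool" where
  "transfer_operator cscale star \<delta> \<delta>s \<longleftrightarrow>
     continuous_on UNIV \<delta>s \<and> clinear_map cscale \<delta>s \<and>
     (\<forall>a. cpositive star a \<longrightarrow> cpositive star (\<delta>s a)) \<and>
     (\<forall>a b. \<delta>s (\<delta> a * b) = a * \<delta>s b)"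

definition nondegenerate_transfer_operator ::
  "(complex \<Rightarrow> 'a::real_normed_algebra_1 \<Rightarrow> 'a) \<Rightarrow> ('a \<Rightarrow> 'a) \<Rightarrow> ('a \<Rightarrow> 'a) \<Rightarrow> ('a \<Rightarrow> 'a) \<Rightarrow> bool" where
  "nondegenerate_transfer_operator cscale star \<delta> \<delta>s \<longleftrightarrow>
     transfer_operator cscale star \<delta> \<delta>s \<and> \<delta> (\<delta>s 1) = \<delta> 1"

definition orth_projection :: "('a::ring \<Rightarrow> 'a) \<Rightarrow> 'a \<Rightarrow> bool" where
  "orth_projection star p \<longleftrightarrow> p * p = p \<and> star p = p"

definition central :: "'a::ring \<Rightarrow> bool" where
  "central p \<longleftrightarrow> (\<forall>a. p * a = a * p)"

definition star_iso_on ::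
  "(complex \<Rightarrow> 'a::ring \<Rightarrow> 'a) \<Rightarrow> ('a \<Rightarrow> 'a) \<Rightarrow> 'a set \<Rightarrow> 'a set \<Rightarrow> ('a \<Rightarrow> 'a) \<Rightarrow> bool" where
  "star_iso_on cscale star S T f \<longleftrightarrow>
     (\<forall>x\<in>S. \<forall>y\<in>S. f (x + y) = f x + f y \<and> f (x * y) = f x * f y) \<and>
     (\<forall>c. \<forall>x\<in>S. f (cscale c x) = cscale c (f x)) \<and>
     (\<forall>x\<in>S. f (star x) = star (f x)) \<and>
     bij_betw f S T"

end

theory Submission
  imports Defs
begin

text \<open>Write \<open>p = \<delta>\<^sub>* 1\<close>. A positive map preserves self-adjointness, since every self-adjoint
  \<open>h\<close> is a difference of positives, \<open>4h = (h + 1)\<^sup>2 - (h - 1)\<^sup>2\<close>. The transfer identity gives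
  \<open>\<delta>\<^sub>*(\<delta> a) = a p\<close>, so \<open>a p\<close> is self-adjoint for self-adjoint \<open>a\<close>, i.e. \<open>p\<close> commutes with
  all self-adjoint elements and hence is central. Non-degeneracy \<open>\<delta> p = \<delta> 1\<close> yields
  \<open>p\<^sup>2 = \<delta>\<^sub>*(\<delta> p) = \<delta>\<^sub>*(\<delta> 1) = p\<close> and \<open>p \<delta>\<^sub>*(b) = \<delta>\<^sub>*(\<delta>(p) b) = \<delta>\<^sub>*(b)\<close>. Thus
  \<open>\<delta>\<^sub>*(\<A>) = p\<A>\<close>, \<open>\<delta>\<^sub>* \<circ> \<delta>\<close> is multiplication by the central projection \<open>p\<close>, and
  \<open>\<delta> \<circ> \<delta>\<^sub>*\<close> is the identity on \<open>\<delta>(\<A>)\<close>.\<close>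

context unital_cstar_algebra
begin

lemma linear_star: "linear star"
proof (rule linearI)
  show "star (r *\<^sub>R x) = r *\<^sub>R star x" for r x
    by (simp add: star_cscale flip: cscale_of_real)
qed (rule star_add)

lemma star_one: "star 1 = 1"
proof -
  have "star 1 = star 1 * star (star 1)" by (simp add: star_star)
  also have "\<dots> = star (star 1 * 1)" by (simp only: star_mult)
  also have "\<dots> = 1" by (simp add: star_star)
  finally show ?thesis .
qed

lemma clinear_map_imp_linear: "clinear_map cscale f \<Longrightarrow> linear f"
  unfolding clinear_map_def by (intro linearI) (auto simp: cscale_of_real[symmetric])

lemma cscale_cancel: "c \<noteq> 0 \<Longrightarrow> cscale c x = cscale c y \<Longrightarrow> x = y"
  by (metis cscale_cscale cscale_one left_inverse)

lemma cpositive_imp_selfadjoint: "cpositive star a \<Longrightarrow> star a = a"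
  by (auto simp: cpositive_def star_mult star_star)

lemma selfadjoint_eq_cpositive_diff:
  assumes "star h = h"
  shows "4 *\<^sub>R h = star (h + 1) * (h + 1) - star (h - 1) * (h - 1)"
proof -
  have "4 *\<^sub>R h = (1 + 1 + 1 + 1) *\<^sub>R h"
    by simp
  also have "\<dots> = h + h + h + h"
    by (simp only: scaleR_add_left scaleR_one)
  also have "\<dots> = (h + 1) * (h + 1) - (h - 1) * (h - 1)"
    by (simp add: distrib_left distrib_right left_diff_distrib right_diff_distrib)
  also have "\<dots> = star (h + 1) * (h + 1) - star (h - 1) * (h - 1)"
    using assms by (simp add: star_add linear_diff[OF linear_star] star_one)
  finally show ?thesis .
qed

lemma positive_map_preserves_selfadjoint:
  assumes f: "clinear_map cscale f" and pos: "\<And>a. cpositive star a \<Longrightarrow> cpositive star (f a)"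
    and h: "star h = h"
  shows "star (f h) = f h"
proof -
  have lin: "linear f" using f by (rule clinear_map_imp_linear)
  have pos_sa: "star (f (star b * b)) = f (star b * b)" for b
    by (intro cpositive_imp_selfadjoint pos) (auto simp: cpositive_def)
  have split: "f (4 *\<^sub>R h) = f (star (h + 1) * (h + 1)) - f (star (h - 1) * (h - 1))"
    by (simp only: selfadjoint_eq_cpositive_diff[OF h] linear_diff[OF lin])
  have "4 *\<^sub>R star (f h) = star (f (4 *\<^sub>R h))"
    by (simp add: linear_scale[OF lin] linear_scale[OF linear_star])
  also have "\<dots> = f (4 *\<^sub>R h)"
    unfolding split by (metis linear_diff[OF linear_star] pos_sa)
  also have "\<dots> = 4 *\<^sub>R f h"
    by (rule linear_scale[OF lin])
  finally show ?thesis by simp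
qed

lemma central_if_commutes_with_selfadjoint:
  assumes comm: "\<And>h. star h = h \<Longrightarrow> p * h = h * p"
  shows "central p"
  unfolding central_def
proof
  fix a
  have re: "p * (a + star a) = (a + star a) * p"
    by (rule comm) (simp add: star_add star_star add.commute)
  have "- (a - star a) = cscale (- 1) (a - star a)"
    using cscale_of_real[of "- 1"] by simp
  then have "star (cscale \<i> (a - star a)) = cscale \<i> (a - star a)"
    by (simp add: star_cscale linear_diff[OF linear_star] star_star cscale_cscale)
  then have "p * cscale \<i> (a - star a) = cscale \<i> (a - star a) * p"
    by (rule comm)
  then have "cscale \<i> (p * (a - star a)) = cscale \<i> ((a - star a) * p)"
    by (simp only: cscale_mult_left cscale_mult_right)
  then have im: "p * (a - star a) = (a - star a) * p"
    by (rule cscale_cancel[rotated]) simp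
  have "2 *\<^sub>R (p * a) = p * (a + star a) + p * (a - star a)"
    by (simp add: distrib_left right_diff_distrib scaleR_2)
  also have "\<dots> = (a + star a) * p + (a - star a) * p"
    by (simp only: re im)
  also have "\<dots> = 2 *\<^sub>R (a * p)"
    by (simp add: distrib_right left_diff_distrib scaleR_2)
  finally show "p * a = a * p" by simp
qed

end

lemma star_iso_on_if_star_endomorphism:
  "star_endomorphism cscale star f \<Longrightarrow> bij_betw f S T \<Longrightarrow> star_iso_on cscale star S T f"
  by (simp add: star_endomorphism_def clinear_map_def star_iso_on_def)

locale cstar_transfer = unital_cstar_algebra cscale star
  for cscale :: "complex \<Rightarrow> 'a::{real_normed_algebra_1, banach} \<Rightarrow> 'a" and star +
  fixes \<delta> \<delta>s :: "'a \<Rightarrow> 'a"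
  assumes star_endomorphism: "star_endomorphism cscale star \<delta>"
    and transfer_operator: "transfer_operator cscale star \<delta> \<delta>s"
begin

lemma delta_mult: "\<delta> (x * y) = \<delta> x * \<delta> y"
  using star_endomorphism by (simp add: star_endomorphism_def)

lemma delta_star: "\<delta> (star x) = star (\<delta> x)"
  using star_endomorphism by (simp add: star_endomorphism_def)

lemma clinear_transfer: "clinear_map cscale \<delta>s"
  using transfer_operator by (simp add: transfer_operator_def)

lemma transfer_cpositive: "cpositive star a \<Longrightarrow> cpositive star (\<delta>s a)"
  using transfer_operator by (simp add: transfer_operator_def)

lemma transfer_delta_mult: "\<delta>s (\<delta> a * b) = a * \<delta>s b"
  using transfer_operator by (simp add: transfer_operator_def)

lemma transfer_delta: "\<delta>s (\<delta> a) = a * \<delta>s 1"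
  using transfer_delta_mult[of a 1] by simp

lemma transfer_one_selfadjoint: "star (\<delta>s 1) = \<delta>s 1"
  by (rule positive_map_preserves_selfadjoint[OF clinear_transfer transfer_cpositive star_one])

lemma transfer_one_central: "central (\<delta>s 1)"
proof (rule central_if_commutes_with_selfadjoint)
  fix h assume h: "star h = h"
  have "star (\<delta> h) = \<delta> h"
    by (simp add: h flip: delta_star)
  then have "star (\<delta>s (\<delta> h)) = \<delta>s (\<delta> h)"
    using positive_map_preserves_selfadjoint[OF clinear_transfer transfer_cpositive] by blast
  then have "star (h * \<delta>s 1) = h * \<delta>s 1"
    by (simp only: transfer_delta)
  then show "\<delta>s 1 * h = h * \<delta>s 1"
    by (simp add: star_mult h transfer_one_selfadjoint)
qed

lemma transfer_one_commute: "\<delta>s 1 * a = a * \<delta>s 1"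
  using transfer_one_central by (simp add: central_def)

end

locale cstar_nondegenerate_transfer = cstar_transfer +
  assumes delta_transfer_one: "\<delta> (\<delta>s 1) = \<delta> 1"
begin

lemma transfer_one_idem: "\<delta>s 1 * \<delta>s 1 = \<delta>s 1"
proof -
  have "\<delta>s 1 * \<delta>s 1 = \<delta>s (\<delta> (\<delta>s 1))" by (rule transfer_delta[symmetric])
  also have "\<dots> = \<delta>s (\<delta> 1)" by (simp only: delta_transfer_one)
  also have "\<dots> = \<delta>s 1" by (simp add: transfer_delta)
  finally show ?thesis .
qed

lemma transfer_one_mult_transfer: "\<delta>s 1 * \<delta>s b = \<delta>s b"
  by (metis transfer_delta_mult delta_transfer_one mult_1)

lemma range_transfer: "range \<delta>s = {\<delta>s 1 * a | a. True}"
proof (intro subset_antisym subsetI)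
  fix x assume "x \<in> range \<delta>s"
  then obtain b where "x = \<delta>s b" by blast
  then show "x \<in> {\<delta>s 1 * a | a. True}"
    by (auto simp: transfer_one_mult_transfer intro!: exI[of _ "\<delta>s b"])
next
  fix x assume "x \<in> {\<delta>s 1 * a | a. True}"
  then obtain a where "x = \<delta>s 1 * a" by blast
  then have "x = \<delta>s (\<delta> a)"
    by (simp add: transfer_delta transfer_one_commute)
  then show "x \<in> range \<delta>s" by simp
qed

lemma transfer_delta_on_range: "x \<in> range \<delta>s \<Longrightarrow> \<delta>s (\<delta> x) = x"
  by (metis rangeE transfer_delta transfer_one_commute transfer_one_mult_transfer)

lemma delta_mult_transfer_one: "\<delta> (a * \<delta>s 1) = \<delta> a"
  by (metis delta_mult delta_transfer_one mult_1_right)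

lemma delta_transfer_on_range: "y \<in> range \<delta> \<Longrightarrow> \<delta> (\<delta>s y) = y"
  by (auto simp: transfer_delta delta_mult_transfer_one)

lemma bij_betw_delta: "bij_betw \<delta> (range \<delta>s) (range \<delta>)"
  by (rule bij_betw_byWitness[where f' = \<delta>s])
    (auto simp: transfer_delta_on_range delta_transfer_on_range)

lemma bij_betw_transfer: "bij_betw \<delta>s (range \<delta>) (range \<delta>s)"
  by (rule bij_betw_byWitness[where f' = \<delta>])
    (auto simp: transfer_delta_on_range delta_transfer_on_range)

lemma star_iso_on_delta: "star_iso_on cscale star (range \<delta>s) (range \<delta>) \<delta>"
  using star_iso_on_if_star_endomorphism[OF star_endomorphism bij_betw_delta] .

lemma star_iso_on_transfer: "star_iso_on cscale star (range \<delta>) (range \<delta>s) \<delta>s"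
  unfolding star_iso_on_def
proof (intro conjI ballI allI bij_betw_transfer)
  fix x y assume "x \<in> range \<delta>" "y \<in> range \<delta>"
  then obtain a b where ab: "x = \<delta> a" "y = \<delta> b" by auto
  show "\<delta>s (x + y) = \<delta>s x + \<delta>s y"
    using clinear_transfer by (simp add: clinear_map_def)
  have "\<delta>s (x * y) = a * b * \<delta>s 1"
    by (simp add: ab transfer_delta flip: delta_mult)
  also have "\<dots> = a * \<delta>s 1 * (b * \<delta>s 1)"
    by (metis transfer_one_idem transfer_one_commute mult.assoc)
  finally show "\<delta>s (x * y) = \<delta>s x * \<delta>s y"
    by (simp add: ab transfer_delta)
  show "\<delta>s (star x) = star (\<delta>s x)"
    by (simp add: ab transfer_delta star_mult transfer_one_selfadjoint
        transfer_one_commute[of "star a"] flip: delta_star)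
next
  show "\<delta>s (cscale c x) = cscale c (\<delta>s x)" for c x
    using clinear_transfer by (simp add: clinear_map_def)
qed

end

theorem proposition4:
  fixes cscale :: "complex \<Rightarrow> 'a::{real_normed_algebra_1, banach} \<Rightarrow> 'a"
    and star :: "'a \<Rightarrow> 'a"
    and \<delta> \<delta>s :: "'a \<Rightarrow> 'a"
  assumes "unital_cstar_algebra cscale star"
    and "star_endomorphism cscale star \<delta>"
    and "nondegenerate_transfer_operator cscale star \<delta> \<delta>s"
  shows "(orth_projection star (\<delta>s 1) \<and> central (\<delta>s 1))
    \<and> range \<delta>s = {\<delta>s 1 * a | a. True}
    \<and> star_iso_on cscale star (range \<delta>s) (range \<delta>) \<delta>
    \<and> star_iso_on cscale star (range \<delta>) (range \<delta>s) \<delta>s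
    \<and> (\<forall>x\<in>range \<delta>s. \<delta>s (\<delta> x) = x) \<and> (\<forall>y\<in>range \<delta>. \<delta> (\<delta>s y) = y)"
proof -
  interpret cstar_nondegenerate_transfer cscale star \<delta> \<delta>s
    using assms
    by (auto simp: nondegenerate_transfer_operator_def cstar_nondegenerate_transfer_def
        cstar_transfer_def cstar_transfer_axioms_def cstar_nondegenerate_transfer_axioms_def)
  show ?thesis
    using transfer_one_idem transfer_one_selfadjoint transfer_one_central range_transfer
      star_iso_on_delta star_iso_on_transfer transfer_delta_on_range delta_transfer_on_range
    unfolding orth_projection_def by blast
qed

end
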